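(* Let $A$ be an $n\times n$ real matrix whose eigenvalues are distinct. Then the following are equivalent: (i) there exists a vector $B_v\in\mathbb{R}^n$ with at most $k$ nonzero entries such that the system $\frac{dx(t)}{dt}=Ax(t)+B_v u(t)$ is controllable; (ii) there exists a real $n\times n$ diagonal matrix $B_d$ with at most $k$ nonzero entries such that the system $\frac{dx(t)}{dt}=Ax(t)+B_d u(t)$ is controllable.
   Context: Controllability refers to the usual notion for continuous-time linear time-invariant systems $\frac{dx}{dt}=Ax+Bu$ (controllability of the pair $(A,B)$). A vector or matrix is called $k$-sparse if it has at most $k$ nonzero entries; the paper phrases (i) as "the system $\Sigma_v$ is $k$-sparse controllable" and (ii) as "the system $\Sigma_d$ is $k$-sparse controllable". *)

theory Defs
  imports "HOL-Analysis.Analysis"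
begin

definition controllable :: "real^'n^'n \<Rightarrow> real^'m^'n \<Rightarrow> bool" where
  "controllable A B \<longleftrightarrow>
     (\<forall>x0 x1. \<exists>T>0. \<exists>(u::real \<Rightarrow> real^'m) (x::real \<Rightarrow> real^'n).
        x 0 = x0 \<and> x T = x1 \<and>
        (\<forall>t\<in>{0..T}. (x has_vector_derivative (A *v x t + B *v u t)) (at t within {0..T})))"

definition complex_eigenvalues :: "real^'n^'n \<Rightarrow> complex set" where
  "complex_eigenvalues A =
     {c. \<exists>v::complex^'n. v \<noteq> 0 \<and>
          (\<chi> i. \<Sum>j\<in>UNIV. complex_of_real (A $ i $ j) * v $ j) = (\<chi> i. c * v $ i)}"

definition distinct_eigenvalues :: "real^'n^'n \<Rightarrow> bool" where
  "distinct_eigenvalues A \<longleftrightarrow> card (complex_eigenvalues A) = CARD('n)"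

definition sparse_vec :: "nat \<Rightarrow> real^'n \<Rightarrow> bool" where
  "sparse_vec k b \<longleftrightarrow> card {i. b $ i \<noteq> 0} \<le> k"

definition sparse_mat :: "nat \<Rightarrow> real^'m^'n \<Rightarrow> bool" where
  "sparse_mat k B \<longleftrightarrow> card {(i, j). B $ i $ j \<noteq> 0} \<le> k"

definition diagonal_mat :: "real^'n^'n \<Rightarrow> bool" where
  "diagonal_mat D \<longleftrightarrow> (\<forall>i j. i \<noteq> j \<longrightarrow> D $ i $ j = 0)"

text \<open>A vector b viewed as an n x 1 input matrix (scalar input).\<close>
definition column :: "real^'n \<Rightarrow> real^1^'n" where
  "column b = (\<chi> i j. b $ i)"

end

theory Submission
  imports Defs "HOL-Computational_Algebra.Polynomial"
begin

text \<open>Since the eigenvalues \<open>\<lambda>\<^sub>i\<close> of \<open>A\<close> are distinct, \<open>A\<close> has an eigenbasis \<open>v\<^sub>i\<close> of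
  \<open>\<complex>\<^sup>n\<close> whose dual basis \<open>w\<^sub>i\<close> consists of left eigenvectors. A vector input \<open>B\<^sub>v u\<close> is
  reproduced by the diagonal input matrix \<open>diag B\<^sub>v\<close> fed with \<open>u\<close> in every channel, which gives
  (i) \<open>\<Longrightarrow>\<close> (ii). Conversely, controllability of \<open>(A, B\<^sub>d)\<close> forces \<open>w\<^sub>i\<^sup>T B\<^sub>d \<noteq> 0\<close> for every \<open>i\<close>
  (Popov-Belevitch-Hautus), so for \<open>c\<close> outside finitely many hyperplanes all coordinates
  \<open>w\<^sub>i\<^sup>T B\<^sub>d c\<close> of \<open>b = B\<^sub>d c\<close> are nonzero. Then \<open>b, A b, \<dots>, A\<^sup>n\<^sup>-\<^sup>1 b\<close> span by a
  Vandermonde argument, hence \<open>(A, b)\<close> is controllable (Kalman), and \<open>b\<close> is as sparse as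
  the diagonal of \<open>B\<^sub>d\<close>.\<close>

section \<open>Bilinear pairing and complexification\<close>

definition vec_dot :: "'a::comm_semiring_1^'n \<Rightarrow> 'a^'n \<Rightarrow> 'a" where
  "vec_dot x y = (\<Sum>i\<in>UNIV. x $ i * y $ i)"

lemma vec_dot_zero_left [simp]: "vec_dot 0 y = 0"
  by (simp add: vec_dot_def)

lemma vec_dot_add_right: "vec_dot x (y + z) = vec_dot x y + vec_dot x z"
  by (simp add: vec_dot_def distrib_left sum.distrib)

lemma vec_dot_scale_left: "vec_dot (c *s x) y = c * vec_dot x y"
  by (simp add: vec_dot_def sum_distrib_left ac_simps)

lemma vec_dot_sum_right:
  "vec_dot x (\<Sum>j\<in>J. c j *s v j) = (\<Sum>j\<in>J. c j * vec_dot x (v j))"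
  unfolding vec_dot_def by (simp add: sum_component sum_distrib_left ac_simps) (rule sum.swap)

lemma vec_dot_matrix_vector_mult: "vec_dot x (M *v y) = vec_dot (x v* M) y"
  unfolding vec_dot_def matrix_vector_mult_def vector_matrix_mult_def
  by (simp add: sum_distrib_left sum_distrib_right ac_simps) (rule sum.swap)

lemma vec_dot_axis: "vec_dot x (axis m 1) = x $ m"
  by (simp add: vec_dot_def axis_def if_distrib cong: if_cong)

lemma vec_eq_if_vec_dot_eq:
  assumes "\<And>z. vec_dot x z = vec_dot y z"
  shows "x = y"
  using assms[of "axis _ 1"] by (simp add: vec_dot_axis vec_eq_iff)

lemma matrix_vector_mult_sum_scale:
  fixes M :: "'a::comm_semiring_1^'n^'m"
  shows "M *v (\<Sum>j\<in>J. c j *s v j) = (\<Sum>j\<in>J. c j *s (M *v v j))"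
proof -
  have "(M *v (\<Sum>j\<in>J. c j *s v j)) $ i = (\<Sum>j\<in>J. c j *s (M *v v j)) $ i" for i
    by (simp add: matrix_vector_mult_def sum_component sum_distrib_left ac_simps) (rule sum.swap)
  then show ?thesis by (simp add: vec_eq_iff)
qed

lemma matrix_vector_mult_sum_scaleR:
  fixes A :: "real^'n^'m"
  shows "A *v (\<Sum>j\<in>J. c j *\<^sub>R v j) = (\<Sum>j\<in>J. c j *\<^sub>R (A *v v j))"
  by (simp add: matrix_vector_mult_sum_scale flip: scalar_mult_eq_scaleR)

definition cmat :: "real^'n^'m \<Rightarrow> complex^'n^'m" where
  "cmat A = (\<chi> i j. complex_of_real (A $ i $ j))"

definition cvec :: "real^'n \<Rightarrow> complex^'n" where
  "cvec x = (\<chi> i. complex_of_real (x $ i))"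

lemma cvec_matrix_vector_mult: "cvec (A *v x) = cmat A *v cvec x"
  by (simp add: cvec_def cmat_def matrix_vector_mult_def vec_eq_iff of_real_sum)

lemma cvec_add: "cvec (x + y) = cvec x + cvec y"
  by (simp add: cvec_def vec_eq_iff)

lemma cvec_axis: "cvec (axis m 1) = axis m 1"
  by (simp add: cvec_def axis_def vec_eq_iff)

lemma vec_dot_cvec_cvec: "vec_dot (cvec x) (cvec y) = of_real (x \<bullet> y)"
  by (simp add: vec_dot_def cvec_def inner_vec_def of_real_sum)

lemma bounded_linear_vec_dot_cvec:
  fixes w :: "complex^'n"
  shows "bounded_linear (\<lambda>x. vec_dot w (cvec x))"
proof -
  have "linear (\<lambda>x. vec_dot w (cvec x))"
  proof (rule linearI)
    fix x y :: "real^'n"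
    show "vec_dot w (cvec (x + y)) = vec_dot w (cvec x) + vec_dot w (cvec y)"
      by (simp add: vec_dot_def cvec_def sum.distrib distrib_left)
  next
    fix r :: real and x :: "real^'n"
    have "vec_dot w (cvec (r *\<^sub>R x)) = (\<Sum>i\<in>UNIV. of_real r * (w $ i * of_real (x $ i)))"
      unfolding vec_dot_def cvec_def by (intro sum.cong refl) (simp add: ac_simps)
    then show "vec_dot w (cvec (r *\<^sub>R x)) = r *\<^sub>R vec_dot w (cvec x)"
      by (simp add: vec_dot_def cvec_def sum_distrib_left scaleR_conv_of_real)
  qed
  then show ?thesis by (simp add: linear_conv_bounded_linear)
qed

section \<open>Vandermonde systems and eigenbases\<close>

definition krylov :: "'a::semiring_1^'n^'n \<Rightarrow> 'a^'n \<Rightarrow> nat \<Rightarrow> 'a^'n" where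
  "krylov A b k = ((*v) A ^^ k) b"

lemma krylov_0 [simp]: "krylov A b 0 = b"
  and krylov_Suc [simp]: "krylov A b (Suc k) = A *v krylov A b k"
  by (simp_all add: krylov_def)

lemma vandermonde_injective:
  fixes lam :: "'n::finite \<Rightarrow> 'a::idom"
  assumes inj: "inj lam" and zero: "\<And>k. k < CARD('n) \<Longrightarrow> (\<Sum>i\<in>UNIV. \<gamma> i * lam i ^ k) = 0"
  shows "\<gamma> j = 0"
proof -
  define L where "L = (\<Prod>i\<in>UNIV - {j}. [:-lam i, 1:])"
  have "degree L = (\<Sum>i\<in>UNIV - {j}. degree [:-lam i, 1:])"
    unfolding L_def by (rule degree_prod_sum_eq) auto
  then have deg: "degree L < CARD('n)" by simp
  have "(\<Sum>i\<in>UNIV. \<gamma> i * poly L (lam i)) = (\<Sum>k\<le>degree L. coeff L k * (\<Sum>i\<in>UNIV. \<gamma> i * lam i ^ k))"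
    by (simp add: poly_altdef sum_distrib_left ac_simps) (rule sum.swap)
  also have "\<dots> = 0" using deg zero by (intro sum.neutral) auto
  finally have "(\<Sum>i\<in>UNIV. \<gamma> i * poly L (lam i)) = 0" .
  moreover have "poly L (lam i) = 0" if "i \<noteq> j" for i
    unfolding L_def poly_prod using that by (intro prod_zero) (auto intro!: bexI[of _ i])
  then have "(\<Sum>i\<in>UNIV. \<gamma> i * poly L (lam i)) = \<gamma> j * poly L (lam j)"
    by (subst sum.remove[of _ j]) auto
  moreover have "poly L (lam j) \<noteq> 0"
    unfolding L_def poly_prod using inj by (auto simp: inj_eq)
  ultimately show ?thesis by simp
qed

lemma eigenvectors_distinct_independent:
  fixes M :: "'a::field^'n^'n" and v :: "'n \<Rightarrow> 'a^'n"
  assumes inj: "inj lam" and nz: "\<And>i. v i \<noteq> 0" and eig: "\<And>i. M *v v i = lam i *s v i"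
    and dep: "(\<Sum>i\<in>UNIV. c i *s v i) = 0"
  shows "c j = 0"
proof -
  have pow: "krylov M (\<Sum>i\<in>UNIV. c i *s v i) k = (\<Sum>i\<in>UNIV. (c i * lam i ^ k) *s v i)" for k
    by (induction k) (simp_all add: matrix_vector_mult_sum_scale eig ac_simps)
  obtain m where m: "v j $ m \<noteq> 0" using nz[of j] by (auto simp: vec_eq_iff)
  have "c j * v j $ m = 0"
  proof (rule vandermonde_injective[OF inj, where \<gamma> = "\<lambda>i. c i * v i $ m"])
    fix k
    have "krylov M (\<Sum>i\<in>UNIV. c i *s v i) k = 0" unfolding dep by (induction k) simp_all
    then show "(\<Sum>i\<in>UNIV. c i * v i $ m * lam i ^ k) = 0"
      unfolding pow by (simp add: vec_eq_iff sum_component ac_simps)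
  qed
  then show ?thesis using m by simp
qed

lemma independent_vectors_dual_basis:
  fixes v :: "'n \<Rightarrow> 'a::field^'n"
  assumes indep: "\<forall>c. (\<Sum>i\<in>UNIV. c i *s v i) = 0 \<longrightarrow> (\<forall>i. c i = 0)"
  obtains w :: "'n \<Rightarrow> 'a^'n" where "\<And>i j. vec_dot (w i) (v j) = (if i = j then 1 else 0)"
    and "\<And>z. z = (\<Sum>i\<in>UNIV. vec_dot (w i) z *s v i)"
proof -
  define V :: "'a^'n^'n" where "V = (\<chi> i j. v j $ i)"
  have col: "Finite_Cartesian_Product.column j V = v j" for j
    by (simp add: V_def Finite_Cartesian_Product.column_def vec_eq_iff)
  have "\<exists>W. W ** V = mat 1"
    unfolding matrix_left_invertible_independent_columns col using indep by blast
  then obtain W where WV: "W ** V = mat 1" ..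
  then have VW: "V ** W = mat 1" by (simp add: matrix_left_right_inverse)
  show ?thesis
  proof (rule that[of "\<lambda>i. W $ i"])
    fix i j
    have "vec_dot (W $ i) (v j) = (W ** V) $ i $ j"
      by (simp add: vec_dot_def matrix_matrix_mult_def V_def)
    then show "vec_dot (W $ i) (v j) = (if i = j then 1 else 0)" by (simp add: WV mat_def)
  next
    fix z
    have "z = V *v (W *v z)" by (simp add: matrix_vector_mul_assoc VW)
    also have "\<dots> = (\<Sum>i\<in>UNIV. (W *v z) $ i *s v i)" by (simp add: matrix_mult_sum col)
    finally show "z = (\<Sum>i\<in>UNIV. vec_dot (W $ i) z *s v i)"
      by (simp add: matrix_vector_mult_def vec_dot_def)
  qed
qed

lemma dual_basis_left_eigenvector:
  fixes M :: "'a::comm_ring_1^'n^'n" and v w :: "'n \<Rightarrow> 'a^'n"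
  assumes dual: "\<And>i j. vec_dot (w i) (v j) = (if i = j then 1 else 0)"
    and expand: "\<And>z. z = (\<Sum>i\<in>UNIV. vec_dot (w i) z *s v i)"
    and eig: "\<And>j. M *v v j = lam j *s v j"
  shows "w i v* M = lam i *s w i"
proof (rule vec_eq_if_vec_dot_eq)
  fix z
  have "vec_dot (w i v* M) z = vec_dot (w i) (M *v (\<Sum>j\<in>UNIV. vec_dot (w j) z *s v j))"
    by (simp add: vec_dot_matrix_vector_mult flip: expand)
  also have "\<dots> = (\<Sum>j\<in>UNIV. (vec_dot (w j) z * lam j) * vec_dot (w i) (v j))"
    by (simp add: matrix_vector_mult_sum_scale eig vec_dot_sum_right ac_simps)
  also have "\<dots> = vec_dot (lam i *s w i) z"
    by (simp add: dual vec_dot_scale_left if_distrib cong: if_cong)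
  finally show "vec_dot (w i v* M) z = vec_dot (lam i *s w i) z" .
qed

lemma distinct_eigenvalues_obtain_eigenvectors:
  fixes A :: "real^'n^'n"
  assumes "distinct_eigenvalues A"
  obtains lam :: "'n \<Rightarrow> complex" and v :: "'n \<Rightarrow> complex^'n"
  where "inj lam" "\<And>i. v i \<noteq> 0" "\<And>i. cmat A *v v i = lam i *s v i"
proof -
  have card: "card (complex_eigenvalues A) = CARD('n)"
    using assms unfolding distinct_eigenvalues_def .
  then have "finite (complex_eigenvalues A)" by (intro card_ge_0_finite) simp
  then obtain lam :: "'n \<Rightarrow> complex" where lam: "bij_betw lam UNIV (complex_eigenvalues A)"
    using finite_same_card_bij[of "UNIV::'n set" "complex_eigenvalues A"] card by auto
  have "\<exists>x. x \<noteq> 0 \<and> cmat A *v x = lam i *s x" for i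
  proof -
    have "lam i \<in> complex_eigenvalues A" using lam by (auto simp: bij_betw_def)
    then obtain x :: "complex^'n" where "x \<noteq> 0"
      "(\<chi> k. \<Sum>j\<in>UNIV. complex_of_real (A $ k $ j) * x $ j) = (\<chi> k. lam i * x $ k)"
      unfolding complex_eigenvalues_def by blast
    then show ?thesis by (intro exI[of _ x]) (simp add: cmat_def matrix_vector_mult_def vec_eq_iff)
  qed
  then obtain v where "\<And>i. v i \<noteq> 0 \<and> cmat A *v v i = lam i *s v i" by metis
  then show ?thesis using that[of lam v] lam by (simp add: bij_betw_def)
qed

lemma distinct_eigenvalues_eigenbasis:
  fixes A :: "real^'n^'n"
  assumes "distinct_eigenvalues A"
  obtains lam :: "'n \<Rightarrow> complex" and v w :: "'n \<Rightarrow> complex^'n"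
  where "inj lam" "\<And>i. cmat A *v v i = lam i *s v i"
    "\<And>i. w i \<noteq> 0" "\<And>i. w i v* cmat A = lam i *s w i"
    "\<And>z. z = (\<Sum>i\<in>UNIV. vec_dot (w i) z *s v i)"
proof -
  obtain lam :: "'n \<Rightarrow> complex" and v :: "'n \<Rightarrow> complex^'n"
    where inj: "inj lam" and nz: "\<And>i. v i \<noteq> 0"
      and eig: "\<And>i. cmat A *v v i = lam i *s v i"
    using distinct_eigenvalues_obtain_eigenvectors[OF assms] by blast
  have indep: "\<forall>c. (\<Sum>i\<in>UNIV. c i *s v i) = 0 \<longrightarrow> (\<forall>i. c i = 0)"
    using eigenvectors_distinct_independent[OF inj nz eig] by blast
  obtain w where dual: "\<And>i j. vec_dot (w i) (v j) = (if i = j then 1 else 0)"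
      and expand: "\<And>z. z = (\<Sum>i\<in>UNIV. vec_dot (w i) z *s v i)"
    using independent_vectors_dual_basis[OF indep] by blast
  have "w i \<noteq> 0" for i
    using dual[of i i] by auto
  with that[OF inj eig _ dual_basis_left_eigenvector[OF dual expand eig] expand] show ?thesis
    by blast
qed

section \<open>Hermite interpolation\<close>

lemma pderiv_linear_power_mult:
  fixes a :: "'a::idom"
  shows "pderiv ([:-a, 1:] ^ Suc m * s) = [:-a, 1:] ^ m * ([:-a, 1:] * pderiv s + smult (of_nat (Suc m)) s)"
proof -
  define q where "q = [:-a, 1:]"
  have "pderiv q = 1" by (simp add: q_def pderiv_pCons)
  moreover have "pderiv (q ^ Suc m * s) = q ^ Suc m * pderiv s + s * (smult (of_nat (Suc m)) (q ^ m) * pderiv q)"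
    by (simp only: pderiv_mult pderiv_power_Suc)
  ultimately have "pderiv (q ^ Suc m * s) = q ^ m * (q * pderiv s + smult (of_nat (Suc m)) s)"
    by (simp add: algebra_simps)
  then show ?thesis by (simp only: q_def)
qed

lemma linear_power_dvd_higher_pderiv:
  fixes a :: "'a::idom"
  assumes "j \<le> m"
  shows "[:-a, 1:] ^ (m - j) dvd (pderiv ^^ j) ([:-a, 1:] ^ m * s)"
  using assms
proof (induction j)
  case 0
  then show ?case by simp
next
  case (Suc j)
  then obtain s' where s': "(pderiv ^^ j) ([:-a, 1:] ^ m * s) = [:-a, 1:] ^ Suc (m - Suc j) * s'"
    by (auto simp: Suc_diff_Suc elim!: dvdE)
  have "(pderiv ^^ Suc j) ([:-a, 1:] ^ m * s) = pderiv ([:-a, 1:] ^ Suc (m - Suc j) * s')"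
    by (simp only: funpow.simps(2) comp_apply s')
  also have "\<dots> = [:-a, 1:] ^ (m - Suc j) * ([:-a, 1:] * pderiv s' + smult (of_nat (Suc (m - Suc j))) s')"
    by (rule pderiv_linear_power_mult)
  finally show ?case by (rule dvdI)
qed

lemma poly_higher_pderiv_linear_power_mult_eq_0:
  fixes a :: "'a::idom"
  assumes "j < m"
  shows "poly ((pderiv ^^ j) ([:-a, 1:] ^ m * s)) a = 0"
proof -
  obtain s' where "(pderiv ^^ j) ([:-a, 1:] ^ m * s) = [:-a, 1:] ^ (m - j) * s'"
    using linear_power_dvd_higher_pderiv[of j m a s] assms by (auto elim: dvdE)
  then show ?thesis using assms by (simp add: poly_power)
qed

lemma poly_higher_pderiv_linear_power_mult_same:
  fixes a :: "'a::{idom, ring_char_0}"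
  shows "poly ((pderiv ^^ N) ([:-a, 1:] ^ N * s)) a = fact N * poly s a"
proof (induction N arbitrary: s)
  case 0
  then show ?case by simp
next
  case (Suc N)
  have "(pderiv ^^ Suc N) ([:-a, 1:] ^ Suc N * s) = (pderiv ^^ N) (pderiv ([:-a, 1:] ^ Suc N * s))"
    by (simp only: funpow_Suc_right comp_apply)
  also have "\<dots> = (pderiv ^^ N) ([:-a, 1:] ^ N * ([:-a, 1:] * pderiv s + smult (of_nat (Suc N)) s))"
    by (simp only: pderiv_linear_power_mult)
  finally show ?case by (simp add: Suc)
qed

text \<open>The \<open>N\<close>-th derivative at \<open>a\<close> is fixed by adding a multiple of \<open>(X - a)\<^sup>N (X - b)\<^sup>m\<close>,
  which leaves the lower derivatives at \<open>a\<close> unchanged.\<close>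
lemma hermite_interpolation_vanishing_at:
  fixes a b :: "'a::field_char_0"
  assumes "a \<noteq> b"
  shows "\<exists>s. \<forall>j<N. poly ((pderiv ^^ j) ([:-b, 1:] ^ m * s)) a = \<eta> j"
proof (induction N)
  case 0
  then show ?case by simp
next
  case (Suc N)
  then obtain s where s: "\<forall>j<N. poly ((pderiv ^^ j) ([:-b, 1:] ^ m * s)) a = \<eta> j" ..
  define p where "p = [:-b, 1:] ^ m * s"
  define q where "q = [:-a, 1:] ^ N * [:-b, 1:] ^ m"
  define c where "c = (\<eta> N - poly ((pderiv ^^ N) p) a) / (fact N * (a - b) ^ m)"
  have q_below: "poly ((pderiv ^^ j) q) a = 0" if "j < N" for j
    unfolding q_def using that by (rule poly_higher_pderiv_linear_power_mult_eq_0)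
  have q_top: "poly ((pderiv ^^ N) q) a = fact N * (a - b) ^ m"
    unfolding q_def by (simp add: poly_higher_pderiv_linear_power_mult_same poly_power)
  have "[:-b, 1:] ^ m * (s + smult c ([:-a, 1:] ^ N)) = p + smult c q"
    by (simp add: p_def q_def algebra_simps)
  moreover have "poly ((pderiv ^^ j) (p + smult c q)) a = \<eta> j" if "j < Suc N" for j
  proof (cases "j < N")
    case True
    then show ?thesis using s q_below by (simp add: p_def higher_pderiv_add higher_pderiv_smult)
  next
    case False
    with that have "j = N" by simp
    then show ?thesis using assms q_top by (simp add: higher_pderiv_add higher_pderiv_smult c_def)
  qed
  ultimately show ?case by metis
qed

lemma hermite_interpolation_two_points:
  fixes a b :: "'a::field_char_0"
  assumes "a \<noteq> b"
  obtains p where "\<And>j. j < m \<Longrightarrow> poly ((pderiv ^^ j) p) a = \<eta> j"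
    and "\<And>j. j < m \<Longrightarrow> poly ((pderiv ^^ j) p) b = \<zeta> j"
proof -
  obtain s where s: "\<forall>j<m. poly ((pderiv ^^ j) ([:-b, 1:] ^ m * s)) a = \<eta> j"
    using hermite_interpolation_vanishing_at[OF assms] by blast
  obtain r where r: "\<forall>j<m. poly ((pderiv ^^ j) ([:-a, 1:] ^ m * r)) b = \<zeta> j"
    using hermite_interpolation_vanishing_at assms by metis
  show ?thesis
    by (rule that[of "[:-b, 1:] ^ m * s + [:-a, 1:] ^ m * r"])
      (simp_all add: higher_pderiv_add s r poly_higher_pderiv_linear_power_mult_eq_0)
qed

section \<open>Controllability criteria\<close>

lemma column_mult_vector: "column b *v v = (v $ 1) *\<^sub>R b"
  by (simp add: column_def matrix_vector_mult_def vec_eq_iff mult.commute UNIV_1)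

lemma span_image_finite_sum:
  fixes f :: "'i \<Rightarrow> 'a::real_vector"
  assumes "finite I" "x \<in> span (f ` I)"
  shows "\<exists>c. x = (\<Sum>i\<in>I. c i *\<^sub>R f i)"
proof -
  let ?T = "{y. \<exists>c. y = (\<Sum>i\<in>I. c i *\<^sub>R f i)}"
  have "subspace ?T"
    unfolding subspace_def
  proof (intro conjI ballI allI)
    show "0 \<in> ?T" by (auto intro!: exI[of _ "\<lambda>_. 0"])
    fix y z assume "y \<in> ?T" "z \<in> ?T"
    then obtain c d where "y = (\<Sum>i\<in>I. c i *\<^sub>R f i)" "z = (\<Sum>i\<in>I. d i *\<^sub>R f i)" by auto
    then show "y + z \<in> ?T"
      by (auto intro!: exI[of _ "\<lambda>i. c i + d i"] simp: sum.distrib scaleR_add_left)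
  next
    fix y and a :: real assume "y \<in> ?T"
    then obtain c where "y = (\<Sum>i\<in>I. c i *\<^sub>R f i)" by auto
    then show "a *\<^sub>R y \<in> ?T"
      by (auto intro!: exI[of _ "\<lambda>i. a * c i"] simp: scaleR_sum_right)
  qed
  moreover have "f i \<in> ?T" if "i \<in> I" for i
  proof -
    have "(\<Sum>j\<in>I. (if j = i then 1 else 0) *\<^sub>R f j) = f i"
      using assms(1) that by (simp add: if_distrib[of "\<lambda>c. c *\<^sub>R _"] cong: if_cong)
    then show ?thesis by (auto intro!: exI[of _ "\<lambda>j. if j = i then 1 else 0"])
  qed
  ultimately have "span (f ` I) \<subseteq> ?T" by (intro span_minimal) auto
  then show ?thesis using assms(2) by auto
qed

lemma controllable_mult_right:
  fixes A :: "real^'n^'n" and B :: "real^'m^'n" and M :: "real^'k^'m"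
  assumes "controllable A (B ** M)"
  shows "controllable A B"
  unfolding controllable_def
proof (intro allI)
  fix x0 x1 :: "real^'n"
  obtain T u x where "T > 0" "x 0 = x0" "x T = x1"
    and "\<forall>t\<in>{0..T}. (x has_vector_derivative A *v x t + (B ** M) *v u t) (at t within {0..T})"
    using assms unfolding controllable_def by blast
  then show "\<exists>T>0. \<exists>u x. x 0 = x0 \<and> x T = x1 \<and>
      (\<forall>t\<in>{0..T}. (x has_vector_derivative A *v x t + B *v u t) (at t within {0..T}))"
    by (intro exI[of _ T] conjI exI[of _ "\<lambda>t. M *v u t"] exI[of _ x])
      (simp_all add: matrix_vector_mul_assoc)
qed

lemma has_vector_derivative_scalar_ode_zero:
  fixes y :: "real \<Rightarrow> complex"
  assumes deriv: "\<And>t. t \<in> {0..T} \<Longrightarrow> (y has_vector_derivative lam * y t) (at t within {0..T})"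
    and "y 0 = 0" and "t \<in> {0..T}"
  shows "y t = 0"
proof -
  define z where "z t = exp (t *\<^sub>R (- lam)) * y t" for t
  have "(z has_vector_derivative 0) (at t within {0..T})" if "t \<in> {0..T}" for t
    unfolding z_def
    by (rule has_vector_derivative_eq_rhs[OF has_vector_derivative_mult[OF
          exp_scaleR_has_vector_derivative_right deriv[OF that]]]) (simp add: algebra_simps)
  then obtain c where c: "\<And>t. t \<in> {0..T} \<Longrightarrow> z t = c"
    using has_vector_derivative_zero_constant[of "{0..T}" z] by auto
  have "z t = z 0" using c[of 0] c[OF \<open>t \<in> {0..T}\<close>] \<open>t \<in> {0..T}\<close> by auto
  then show ?thesis using \<open>y 0 = 0\<close> by (simp add: z_def)
qed

lemma controllable_left_eigenvector_input_nonzero: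
  fixes A :: "real^'n^'n" and B :: "real^'m^'n"
  assumes ctrl: "controllable A B" and "w \<noteq> 0" and eig: "w v* cmat A = lam *s w"
  shows "w v* cmat B \<noteq> 0"
proof
  assume orth: "w v* cmat B = 0"
  obtain m where m: "w $ m \<noteq> 0" using \<open>w \<noteq> 0\<close> by (auto simp: vec_eq_iff)
  obtain T u x where "T > 0" "x 0 = 0" "x T = axis m 1"
    and deriv: "\<And>t. t \<in> {0..T} \<Longrightarrow> (x has_vector_derivative A *v x t + B *v u t) (at t within {0..T})"
    using ctrl unfolding controllable_def by (metis (no_types, lifting))
  define y where "y t = vec_dot w (cvec (x t))" for t
  have y_deriv: "(y has_vector_derivative lam * y t) (at t within {0..T})" if "t \<in> {0..T}" for t
    using bounded_linear.has_vector_derivative[OF bounded_linear_vec_dot_cvec[of w] deriv[OF that]]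
    by (simp add: y_def[abs_def] cvec_add vec_dot_add_right cvec_matrix_vector_mult
        vec_dot_matrix_vector_mult eig orth vec_dot_scale_left)
  moreover have "y 0 = 0" by (simp add: y_def \<open>x 0 = 0\<close> vec_dot_def cvec_def)
  moreover have "T \<in> {0..T}" using \<open>T > 0\<close> by simp
  ultimately have "y T = 0" by (rule has_vector_derivative_scalar_ode_zero)
  moreover have "y T = w $ m" by (simp add: y_def \<open>x T = axis m 1\<close> cvec_axis vec_dot_axis)
  ultimately show False using m by simp
qed

text \<open>The vectors \<open>R j = \<Sum>i\<in>{j..n}. \<beta> i A\<^sup>i\<^sup>-\<^sup>j b\<close>, built from an annihilating polynomial
  \<open>\<Sum>i\<le>n. \<beta> i X\<^sup>i\<close> of \<open>b\<close> with \<open>\<beta> n = 1\<close>, form the basis of the controllable canonical form.\<close>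
lemma krylov_companion_basis:
  fixes A :: "real^'n^'n"
  assumes span: "span (krylov A b ` {..<CARD('n)}) = UNIV"
  obtains \<beta> R where "R 0 = 0" "R CARD('n) = b"
    "\<And>j. j < CARD('n) \<Longrightarrow> A *v R (Suc j) = R j - \<beta> j *\<^sub>R b"
    "span ((\<lambda>j. R (Suc j)) ` {..<CARD('n)}) = UNIV"
proof -
  define n where "n = CARD('n)"
  obtain \<alpha> where \<alpha>: "krylov A b n = (\<Sum>i<n. \<alpha> i *\<^sub>R krylov A b i)"
    using span_image_finite_sum[of "{..<n}" "krylov A b n" "krylov A b"] span unfolding n_def by auto
  define \<beta> where "\<beta> i = (if i = n then 1 else - \<alpha> i)" for i
  define R where "R j = (\<Sum>i\<in>{j..n}. \<beta> i *\<^sub>R krylov A b (i - j))" for j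
  have R0: "R 0 = 0"
  proof -
    have "R 0 = (\<Sum>i\<le>n. \<beta> i *\<^sub>R krylov A b i)" unfolding R_def by (simp add: atLeast0AtMost)
    also have "\<dots> = krylov A b n + (\<Sum>i<n. (- \<alpha> i) *\<^sub>R krylov A b i)"
      by (simp add: \<beta>_def lessThan_Suc_atMost[symmetric] cong: if_cong)
    also have "\<dots> = 0" using \<alpha> by (simp add: sum_negf)
    finally show ?thesis .
  qed
  have Rn: "R n = b" unfolding R_def \<beta>_def by simp
  have AR: "A *v R (Suc j) = R j - \<beta> j *\<^sub>R b" if "j < n" for j
  proof -
    have "A *v R (Suc j) = (\<Sum>i\<in>{Suc j..n}. \<beta> i *\<^sub>R krylov A b (i - j))"
      unfolding R_def matrix_vector_mult_sum_scaleR
      by (intro sum.cong refl) (simp del: krylov_Suc add: krylov_Suc[symmetric] Suc_diff_Suc)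
    also have "\<dots> = R j - \<beta> j *\<^sub>R b"
      unfolding R_def using that by (simp add: sum.atLeast_Suc_atMost)
    finally show ?thesis .
  qed
  let ?S = "span ((\<lambda>j. R (Suc j)) ` {..<n})"
  have R_in: "R j \<in> ?S" if "j \<le> n" for j
    using that by (cases j) (auto simp: R0 span_zero intro!: span_base)
  have b_in: "b \<in> ?S" using R_in[of n] Rn by simp
  have A_in: "A *v x \<in> ?S" if "x \<in> ?S" for x
  proof -
    have "A *v R (Suc j) \<in> ?S" if "j < n" for j
      using AR[OF that] R_in[of j] b_in that by (simp add: span_diff span_scale)
    then have "span ((*v) A ` ((\<lambda>j. R (Suc j)) ` {..<n})) \<subseteq> ?S"
      by (intro span_minimal) (auto simp: subspace_span)
    moreover have "A *v x \<in> span ((*v) A ` ((\<lambda>j. R (Suc j)) ` {..<n}))"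
      using that by (auto simp: span_linear_image matrix_vector_mul_linear)
    ultimately show ?thesis by blast
  qed
  have "krylov A b k \<in> ?S" for k
    by (induction k) (simp_all add: b_in A_in)
  then have "span (krylov A b ` {..<n}) \<subseteq> ?S" by (intro span_minimal) (auto simp: subspace_span)
  then have "?S = UNIV" using span unfolding n_def by auto
  with R0 Rn AR show ?thesis using that unfolding n_def by blast
qed

text \<open>In the coordinates \<open>x = \<Sum>j<n. y\<^sub>j R (j + 1)\<close> the system becomes the chain of
  integrators \<open>y\<^sub>j' = y\<^sub>j\<^sub>+\<^sub>1\<close>, so any polynomial \<open>y\<^sub>0\<close> with prescribed derivatives at 0 and 1
  yields a steering trajectory.\<close>
lemma controllable_column_if_companion_basis:
  fixes A :: "real^'n^'n"
  assumes R0: "R 0 = 0" and Rn: "R n = b"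
    and AR: "\<And>j. j < n \<Longrightarrow> A *v R (Suc j) = R j - \<beta> j *\<^sub>R b"
    and span: "span ((\<lambda>j. R (Suc j)) ` {..<n}) = UNIV"
  shows "controllable A (column b)"
  unfolding controllable_def
proof (intro allI)
  fix x0 x1 :: "real^'n"
  obtain \<eta> where \<eta>: "x0 = (\<Sum>j<n. \<eta> j *\<^sub>R R (Suc j))"
    using span_image_finite_sum[of "{..<n}" x0 "\<lambda>j. R (Suc j)"] span by auto
  obtain \<zeta> where \<zeta>: "x1 = (\<Sum>j<n. \<zeta> j *\<^sub>R R (Suc j))"
    using span_image_finite_sum[of "{..<n}" x1 "\<lambda>j. R (Suc j)"] span by auto
  obtain p :: "real poly" where p0: "\<And>j. j < n \<Longrightarrow> poly ((pderiv ^^ j) p) 0 = \<eta> j"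
      and p1: "\<And>j. j < n \<Longrightarrow> poly ((pderiv ^^ j) p) 1 = \<zeta> j"
    using hermite_interpolation_two_points[where a = "0::real" and b = 1 and m = n
        and \<eta> = \<eta> and \<zeta> = \<zeta>] by auto
  define y where "y j t = poly ((pderiv ^^ j) p) t" for j t
  define x where "x t = (\<Sum>j<n. y j t *\<^sub>R R (Suc j))" for t
  define u where "u t = (\<chi> _::1. y n t + (\<Sum>j<n. \<beta> j * y j t))" for t
  have y_deriv: "(y j has_field_derivative y (Suc j) t) (at t within S)" for j t S
    unfolding y_def using poly_DERIV[of "(pderiv ^^ j) p" t]
    by (simp add: has_field_derivative_at_within)
  have "(x has_vector_derivative A *v x t + column b *v u t) (at t within {0..1})" for t
  proof -
    have "(x has_vector_derivative (\<Sum>j<n. y (Suc j) t *\<^sub>R R (Suc j))) (at t within {0..1})"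
      unfolding x_def
      by (rule has_vector_derivative_sum) (auto intro!: has_vector_derivative_scaleR[OF y_deriv,
          THEN has_vector_derivative_eq_rhs] has_vector_derivative_const)
    moreover have "(\<Sum>j<n. y (Suc j) t *\<^sub>R R (Suc j)) = (\<Sum>j<n. y j t *\<^sub>R R j) + y n t *\<^sub>R b"
      using sum.lessThan_Suc_shift[of "\<lambda>j. y j t *\<^sub>R R j" n] by (simp add: R0 Rn)
    moreover have "A *v x t = (\<Sum>j<n. y j t *\<^sub>R (R j - \<beta> j *\<^sub>R b))"
      unfolding x_def matrix_vector_mult_sum_scaleR by (intro sum.cong refl) (simp add: AR)
    then have "A *v x t = (\<Sum>j<n. y j t *\<^sub>R R j) - (\<Sum>j<n. \<beta> j * y j t) *\<^sub>R b"
      by (simp add: scaleR_diff_right sum_subtractf scaleR_sum_left mult.commute)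
    then have "A *v x t + column b *v u t = (\<Sum>j<n. y j t *\<^sub>R R j) + y n t *\<^sub>R b"
      by (simp add: column_mult_vector u_def algebra_simps)
    ultimately show ?thesis by simp
  qed
  moreover have "x 0 = x0" "x 1 = x1" by (simp_all add: x_def y_def \<eta> \<zeta> p0 p1)
  ultimately show "\<exists>T>0. \<exists>u x. x 0 = x0 \<and> x T = x1 \<and>
      (\<forall>t\<in>{0..T}. (x has_vector_derivative A *v x t + column b *v u t) (at t within {0..T}))"
    by (intro exI[of _ 1] conjI exI[of _ u] exI[of _ x]) auto
qed

lemma controllable_column_if_krylov_span:
  fixes A :: "real^'n^'n"
  assumes "span (krylov A b ` {..<CARD('n)}) = UNIV"
  shows "controllable A (column b)"
proof -
  obtain \<beta> R where "R 0 = 0" "R CARD('n) = b"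
    "\<And>j. j < CARD('n) \<Longrightarrow> A *v R (Suc j) = R j - \<beta> j *\<^sub>R b"
    "span ((\<lambda>j. R (Suc j)) ` {..<CARD('n)}) = UNIV"
    using krylov_companion_basis[OF assms] by blast
  then show ?thesis by (rule controllable_column_if_companion_basis)
qed

lemma krylov_span_if_eigen_coordinates_nonzero:
  fixes A :: "real^'n^'n" and v w :: "'n \<Rightarrow> complex^'n"
  assumes inj: "inj lam" and eig: "\<And>i. cmat A *v v i = lam i *s v i"
    and expand: "\<And>z. z = (\<Sum>i\<in>UNIV. vec_dot (w i) z *s v i)"
    and nz: "\<And>i. vec_dot (w i) (cvec b) \<noteq> 0"
  shows "span (krylov A b ` {..<CARD('n)}) = UNIV"
proof (rule ccontr)
  let ?S = "krylov A b ` {..<CARD('n)}"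
  assume "span ?S \<noteq> UNIV"
  then have "dim ?S < DIM(real^'n)"
    using dim_eq_full[of ?S] dim_subset_UNIV[of ?S] by linarith
  then obtain p :: "real^'n" where "p \<noteq> 0" and orth: "\<And>y. y \<in> span ?S \<Longrightarrow> orthogonal p y"
    using orthogonal_to_subspace_exists by blast
  define \<beta> where "\<beta> i = vec_dot (w i) (cvec b)" for i
  have coords: "cvec (krylov A b k) = (\<Sum>i\<in>UNIV. (\<beta> i * lam i ^ k) *s v i)" for k
  proof (induction k)
    case 0
    show ?case by (simp add: \<beta>_def flip: expand)
  next
    case (Suc k)
    then show ?case by (simp add: cvec_matrix_vector_mult matrix_vector_mult_sum_scale eig ac_simps)
  qed
  have "vec_dot (cvec p) (v i) = 0" for i
  proof -
    have "\<beta> i * vec_dot (cvec p) (v i) = 0"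
    proof (rule vandermonde_injective[OF inj, where \<gamma> = "\<lambda>i. \<beta> i * vec_dot (cvec p) (v i)"])
      fix k assume "k < CARD('n)"
      then have "krylov A b k \<in> span ?S" by (intro span_base) auto
      then have "vec_dot (cvec p) (cvec (krylov A b k)) = 0"
        using orth by (simp add: orthogonal_def vec_dot_cvec_cvec)
      then show "(\<Sum>i\<in>UNIV. \<beta> i * vec_dot (cvec p) (v i) * lam i ^ k) = 0"
        by (simp add: coords vec_dot_sum_right ac_simps)
    qed
    then show ?thesis using nz by (simp add: \<beta>_def)
  qed
  then have "vec_dot (cvec p) (\<Sum>i\<in>UNIV. vec_dot (w i) (cvec p) *s v i) = 0"
    by (simp add: vec_dot_sum_right)
  then have "p \<bullet> p = 0" by (simp add: vec_dot_cvec_cvec flip: expand)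
  then show False using \<open>p \<noteq> 0\<close> by simp
qed

lemma exists_real_vector_vec_dot_nonzero:
  fixes a :: "'i \<Rightarrow> complex^'n"
  assumes "finite I" and nz: "\<And>i. i \<in> I \<Longrightarrow> a i \<noteq> 0"
  obtains c :: "real^'n" where "\<And>i. i \<in> I \<Longrightarrow> vec_dot (a i) (cvec c) \<noteq> 0"
proof -
  define re where "re i = (\<chi> j. Re (a i $ j))" for i
  define im where "im i = (\<chi> j. Im (a i $ j))" for i
  define \<rho> where "\<rho> i = (if re i \<noteq> 0 then re i else im i)" for i
  have \<rho>_nz: "\<rho> i \<noteq> 0" if "i \<in> I" for i
    using nz[OF that] by (auto simp: \<rho>_def re_def im_def vec_eq_iff complex_eq_iff)
  have "\<rho> i \<bullet> c = 0" if "vec_dot (a i) (cvec c) = 0" for i c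
  proof -
    have "Re (vec_dot (a i) (cvec c)) = re i \<bullet> c" "Im (vec_dot (a i) (cvec c)) = im i \<bullet> c"
      by (simp_all add: vec_dot_def cvec_def re_def im_def inner_vec_def)
    then show ?thesis using that by (simp add: \<rho>_def)
  qed
  then have "{c. \<exists>i\<in>I. vec_dot (a i) (cvec c) = 0} \<subseteq> (\<Union>i\<in>I. {c. \<rho> i \<bullet> c = 0})" by blast
  moreover have "negligible (\<Union>i\<in>I. {c::real^'n. \<rho> i \<bullet> c = 0})"
    using \<open>finite I\<close> \<rho>_nz by (intro negligible_Union) (auto intro!: negligible_hyperplane)
  ultimately have "negligible {c. \<exists>i\<in>I. vec_dot (a i) (cvec c) = 0}"
    by (rule negligible_subset[rotated])
  then have "{c. \<exists>i\<in>I. vec_dot (a i) (cvec c) = 0} \<noteq> UNIV" by auto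
  then show ?thesis using that by blast
qed

section \<open>Sparse diagonal input matrices\<close>

definition diag :: "'a::zero^'n \<Rightarrow> 'a^'n^'n" where
  "diag b = (\<chi> i j. if i = j then b $ i else 0)"

lemma diagonal_mat_diag: "diagonal_mat (diag b)"
  by (simp add: diagonal_mat_def diag_def)

lemma sparse_mat_diag_iff: "sparse_mat k (diag b) \<longleftrightarrow> sparse_vec k b"
proof -
  have "{(i, j). diag b $ i $ j \<noteq> 0} = (\<lambda>i. (i, i)) ` {i. b $ i \<noteq> 0}"
    by (auto simp: diag_def split: if_splits)
  then show ?thesis by (simp add: sparse_mat_def sparse_vec_def card_image inj_on_def)
qed

lemma column_eq_diag_mult: "column b = diag b ** (\<chi> i j. 1)"
  by (simp add: column_def diag_def matrix_matrix_mult_def vec_eq_iff)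

lemma diagonal_mat_mult_vector_nth:
  assumes "diagonal_mat D"
  shows "(D *v c) $ i = D $ i $ i * c $ i"
proof -
  have "(D *v c) $ i = (\<Sum>j\<in>UNIV. if j = i then D $ i $ i * c $ j else 0)"
    unfolding matrix_vector_mult_def vec_lambda_beta
    by (intro sum.cong refl) (use assms in \<open>auto simp: diagonal_mat_def\<close>)
  then show ?thesis by simp
qed

lemma sparse_vec_diagonal_mult:
  assumes "diagonal_mat D" and "sparse_mat k D"
  shows "sparse_vec k (D *v c)"
proof -
  have "card {i. (D *v c) $ i \<noteq> 0} = card ((\<lambda>i. (i, i)) ` {i. (D *v c) $ i \<noteq> 0})"
    by (simp add: card_image inj_on_def)
  also have "\<dots> \<le> card {(i, j). D $ i $ j \<noteq> 0}"
    by (intro card_mono) (auto simp: diagonal_mat_mult_vector_nth[OF assms(1)])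
  finally show ?thesis using assms(2) by (simp add: sparse_vec_def sparse_mat_def)
qed

theorem theorem2:
  fixes A :: "real^'n^'n" and k :: nat
  assumes "distinct_eigenvalues A"
  shows "(\<exists>Bv::real^'n. sparse_vec k Bv \<and> controllable A (column Bv)) \<longleftrightarrow>
         (\<exists>Bd::real^'n^'n. diagonal_mat Bd \<and> sparse_mat k Bd \<and> controllable A Bd)"
proof
  assume "\<exists>Bv::real^'n. sparse_vec k Bv \<and> controllable A (column Bv)"
  then obtain b where "sparse_vec k b" "controllable A (diag b ** ((\<chi> i j. 1) :: real^1^'n))"
    by (auto simp: column_eq_diag_mult)
  then show "\<exists>Bd::real^'n^'n. diagonal_mat Bd \<and> sparse_mat k Bd \<and> controllable A Bd"
    by (intro exI[of _ "diag b"]) (simp add: diagonal_mat_diag sparse_mat_diag_iff controllable_mult_right)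
next
  assume "\<exists>Bd::real^'n^'n. diagonal_mat Bd \<and> sparse_mat k Bd \<and> controllable A Bd"
  then obtain D :: "real^'n^'n" where D: "diagonal_mat D" "sparse_mat k D" "controllable A D"
    by blast
  obtain lam :: "'n \<Rightarrow> complex" and v w :: "'n \<Rightarrow> complex^'n"
    where inj: "inj lam" and eig: "\<And>i. cmat A *v v i = lam i *s v i"
    and w_nz: "\<And>i. w i \<noteq> 0" and left_eig: "\<And>i. w i v* cmat A = lam i *s w i"
    and expand: "\<And>z. z = (\<Sum>i\<in>UNIV. vec_dot (w i) z *s v i)"
    using distinct_eigenvalues_eigenbasis[OF assms] by blast
  have "w i v* cmat D \<noteq> 0" for i
    using controllable_left_eigenvector_input_nonzero[OF D(3) w_nz left_eig] .
  then obtain c where "\<And>i. vec_dot (w i v* cmat D) (cvec c) \<noteq> 0"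
    using exists_real_vector_vec_dot_nonzero[of UNIV "\<lambda>i. w i v* cmat D"] by auto
  then have "vec_dot (w i) (cvec (D *v c)) \<noteq> 0" for i
    by (simp add: cvec_matrix_vector_mult vec_dot_matrix_vector_mult)
  then have "controllable A (column (D *v c))"
    by (intro controllable_column_if_krylov_span krylov_span_if_eigen_coordinates_nonzero[OF inj eig expand])
  then show "\<exists>Bv::real^'n. sparse_vec k Bv \<and> controllable A (column Bv)"
    using sparse_vec_diagonal_mult[OF D(1,2)] by blast
qed

end
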